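(* Under the standing setting and assumptions (A1)–(A3) described in the context, assume $\mathcal A$ is strictly convex. Then the optimal payoff map $\mathcal R$ is lower semicontinuous at every $X\in\mathcal X$.
   Context: Let $\mathcal X$ be a Hausdorff, first countable, locally convex topological vector space over $\mathbb R$, partially ordered by a partial order $\geq$ with positive cone $\mathcal X_+=\{X\in\mathcal X: X\geq 0\}$. Let $\mathcal M\subset\mathcal X$ be a vector subspace with $1<\dim\mathcal M<\infty$, carrying the relative topology, and let $\pi:\mathcal M\to\mathbb R$ be linear. Standing assumptions: (A1) there is $U\in\mathcal M\cap\mathcal X_+$ with $\pi(U)=1$; (A2) $\mathcal A\subsetneq\mathcal X$ is closed, contains $0$, and satisfies $\mathcal A+\mathcal X_+\subset\mathcal A$; (A3) the map $\rho(X)=\inf\{\pi(Z): Z\in\mathcal M,\ X+Z\in\mathcal A\}$ is finitely valued and continuous on $\mathcal X$. The optimal payoff map is $\mathcal R(X)=\{Z\in\mathcal M: X+Z\in\mathcal A,\ \pi(Z)=\rho(X)\}$. $\mathcal A$ is strictly convex if $\lambda X+(1-\lambda)Y\in\mathrm{int}\,\mathcal A$ for all $\lambda\in(0,1)$ and all distinct $X,Y\in\mathcal A$. $\mathcal R$ is lower semicontinuous at $X$ if for every open $\mathcal U\subset\mathcal M$ with $\mathcal R(X)\cap\mathcal U\neq\emptyset$ there is an open neighborhood $\mathcal U_X$ of $X$ with $\mathcal R(Y)\cap\mathcal U\neq\emptyset$ for all $Y\in\mathcal U_X$. *)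

theory Defs
  imports "HOL-Analysis.Analysis"
begin

definition lc_tvs :: "('a::{real_vector, t2_space, first_countable_topology}) itself \<Rightarrow> bool" where
  "lc_tvs _ \<longleftrightarrow>
     continuous_on UNIV (\<lambda>(x::'a, y::'a). x + y) \<and>
     continuous_on UNIV (\<lambda>(c::real, x::'a). c *\<^sub>R x) \<and>
     (\<forall>U::'a set. open U \<and> 0 \<in> U \<longrightarrow> (\<exists>V. open V \<and> convex V \<and> 0 \<in> V \<and> V \<subseteq> U))"

definition vector_order :: "('a::real_vector \<Rightarrow> 'a \<Rightarrow> bool) \<Rightarrow> bool" where
  "vector_order ge \<longleftrightarrow>
     (\<forall>x. ge x x) \<and>
     (\<forall>x y z. ge x y \<longrightarrow> ge y z \<longrightarrow> ge x z) \<and>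
     (\<forall>x y. ge x y \<longrightarrow> ge y x \<longrightarrow> x = y) \<and>
     (\<forall>x y z. ge x y \<longrightarrow> ge (x + z) (y + z)) \<and>
     (\<forall>x y (c::real). c \<ge> 0 \<longrightarrow> ge x y \<longrightarrow> ge (c *\<^sub>R x) (c *\<^sub>R y))"

definition pos_cone :: "('a::real_vector \<Rightarrow> 'a \<Rightarrow> bool) \<Rightarrow> 'a set" where
  "pos_cone ge = {x. ge x 0}"

definition linear_on_sub :: "'a::real_vector set \<Rightarrow> ('a \<Rightarrow> real) \<Rightarrow> bool" where
  "linear_on_sub M \<pi> \<longleftrightarrow>
     (\<forall>x\<in>M. \<forall>y\<in>M. \<pi> (x + y) = \<pi> x + \<pi> y) \<and>
     (\<forall>x\<in>M. \<forall>c. \<pi> (c *\<^sub>R x) = c * \<pi> x)"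

definition rho :: "'a::real_vector set \<Rightarrow> ('a \<Rightarrow> real) \<Rightarrow> 'a set \<Rightarrow> 'a \<Rightarrow> real" where
  "rho M \<pi> A X = Inf {\<pi> Z | Z. Z \<in> M \<and> X + Z \<in> A}"

definition opt_payoff :: "'a::real_vector set \<Rightarrow> ('a \<Rightarrow> real) \<Rightarrow> 'a set \<Rightarrow> 'a \<Rightarrow> 'a set" where
  "opt_payoff M \<pi> A X = {Z \<in> M. X + Z \<in> A \<and> \<pi> Z = rho M \<pi> A X}"

definition strictly_convex_set :: "'a::{real_vector, topological_space} set \<Rightarrow> bool" where
  "strictly_convex_set A \<longleftrightarrow>
     (\<forall>X\<in>A. \<forall>Y\<in>A. X \<noteq> Y \<longrightarrow> (\<forall>l::real. 0 < l \<and> l < 1 \<longrightarrow> l *\<^sub>R X + (1 - l) *\<^sub>R Y \<in> interior A))"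

definition lsc_at :: "'a::topological_space set \<Rightarrow> ('a \<Rightarrow> 'a set) \<Rightarrow> 'a \<Rightarrow> bool" where
  "lsc_at M R X \<longleftrightarrow>
     (\<forall>U. openin (top_of_set M) U \<longrightarrow> R X \<inter> U \<noteq> {} \<longrightarrow>
        (\<exists>UX. open UX \<and> X \<in> UX \<and> (\<forall>Y\<in>UX. R Y \<inter> U \<noteq> {})))"

end

theory Submission imports Defs begin

text \<open>Strict convexity makes the optimal payoff \<open>\<R> X\<close> unique: the midpoint of two optimal
  payoffs lies in the interior of \<open>\<A>\<close> and can be pushed down along \<open>U\<close> to a cheaper payoff.
  In coordinates with respect to a basis of \<open>\<M>\<close>, on a small sphere around \<open>\<R> X\<close> every
  acceptable payoff costs at least \<open>\<rho>(X) + \<eta>\<close>; by compactness (tube lemma) this persists for all \<open>Y\<close> near \<open>X\<close>. For such \<open>Y\<close> the payoff \<open>\<R> X + \<epsilon> U\<close> stays acceptable and costs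
  less than \<open>\<rho>(X) + \<eta>\<close>, so by convexity the whole sublevel set of acceptable payoffs of \<open>Y\<close>
  with cost at most \<open>\<rho>(X) + \<eta>\<close> is trapped inside the sphere. This set is compact, so \<open>\<pi>\<close> attains
  its minimum there, and that minimiser is an optimal payoff of \<open>Y\<close> close to \<open>\<R> X\<close>.\<close>

lemma continuous_on_add_tvs:
  fixes f g :: "'b::topological_space \<Rightarrow> 'a::{real_vector,t2_space,first_countable_topology}"
  assumes "lc_tvs TYPE('a)" "continuous_on S f" "continuous_on S g"
  shows "continuous_on S (\<lambda>x. f x + g x)"
proof -
  have add: "continuous_on UNIV (\<lambda>(x::'a, y). x + y)" using assms(1) by (simp add: lc_tvs_def)
  have "continuous_on S (\<lambda>x. (f x, g x))" by (intro continuous_on_Pair assms)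
  from continuous_on_compose2[OF add this] show ?thesis by auto
qed

lemma continuous_on_scaleR_tvs:
  fixes f :: "'b::topological_space \<Rightarrow> real"
    and g :: "'b \<Rightarrow> 'a::{real_vector,t2_space,first_countable_topology}"
  assumes "lc_tvs TYPE('a)" "continuous_on S f" "continuous_on S g"
  shows "continuous_on S (\<lambda>x. f x *\<^sub>R g x)"
proof -
  have scale: "continuous_on UNIV (\<lambda>(c::real, y::'a). c *\<^sub>R y)" using assms(1) by (simp add: lc_tvs_def)
  have "continuous_on S (\<lambda>x. (f x, g x))" by (intro continuous_on_Pair assms)
  from continuous_on_compose2[OF scale this] show ?thesis by auto
qed

lemma continuous_on_sum_tvs:
  fixes f :: "'c \<Rightarrow> 'b::topological_space \<Rightarrow> 'a::{real_vector,t2_space,first_countable_topology}"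
  assumes "lc_tvs TYPE('a)" "finite I" "\<And>i. i \<in> I \<Longrightarrow> continuous_on S (f i)"
  shows "continuous_on S (\<lambda>x. \<Sum>i\<in>I. f i x)"
  using assms(2,3)
proof (induction I rule: finite_induct)
  case empty
  then show ?case by (simp add: continuous_on_const)
next
  case (insert i I)
  then show ?case by (simp add: continuous_on_add_tvs[OF assms(1)])
qed

lemma open_fun_contains_finite_box:
  fixes G :: "('a \<Rightarrow> real) set"
  assumes "open G" "z \<in> G" "finite B"
  shows "\<exists>\<delta>>0. \<forall>w. (\<forall>v. v \<notin> B \<longrightarrow> w v = z v) \<longrightarrow> (\<forall>v\<in>B. \<bar>w v - z v\<bar> \<le> \<delta>) \<longrightarrow> w \<in> G"
proof -
  have "openin (product_topology (\<lambda>i. euclidean) UNIV) G" using assms(1) by (simp add: open_fun_def)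
  from product_topology_open_contains_basis[OF this assms(2)] obtain X where
    X: "z \<in> (\<Pi>\<^sub>E i\<in>UNIV. X i)" "\<forall>i. openin euclidean (X i)" "(\<Pi>\<^sub>E i\<in>UNIV. X i) \<subseteq> G"
    by blast
  have "\<forall>v. \<exists>e>0. ball (z v) e \<subseteq> X v"
    using X(1,2) by (metis PiE_iff UNIV_I open_contains_ball open_openin)
  then obtain e where e: "\<And>v. e v > 0" "\<And>v. ball (z v) (e v) \<subseteq> X v" by metis
  define \<delta> where "\<delta> = Min (insert 1 (e ` B)) / 2"
  have Min_pos: "Min (insert 1 (e ` B)) > 0" using assms(3) e(1) by (subst Min_gr_iff) auto
  have "w \<in> G" if outside: "\<forall>v. v \<notin> B \<longrightarrow> w v = z v" and inside: "\<forall>v\<in>B. \<bar>w v - z v\<bar> \<le> \<delta>" for w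
  proof -
    have "w v \<in> X v" for v
    proof (cases "v \<in> B")
      case True
      have "Min (insert 1 (e ` B)) \<le> e v" using True assms(3) by (intro Min_le) auto
      then have "\<bar>w v - z v\<bar> < e v" using inside True Min_pos by (auto simp: \<delta>_def)
      then have "w v \<in> ball (z v) (e v)" by (simp add: dist_real_def abs_minus_commute)
      then show ?thesis using e(2) by blast
    next
      case False
      then show ?thesis using outside X(1) by (auto simp: PiE_iff)
    qed
    then show ?thesis using X(3) by (auto simp: PiE_iff)
  qed
  moreover have "\<delta> > 0" using Min_pos by (simp add: \<delta>_def)
  ultimately show ?thesis by blast
qed

lemma compact_PiE_atLeastAtMost:
  fixes a b :: "'a \<Rightarrow> real"
  shows "compact (\<Pi>\<^sub>E v\<in>UNIV. {a v .. b v})"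
proof -
  have "compactin (product_topology (\<lambda>i. euclidean) UNIV) (\<Pi>\<^sub>E v\<in>UNIV. {a v .. b v})"
    by (subst compactin_PiE) auto
  then show ?thesis by (simp add: euclidean_product_topology compactin_euclidean_iff)
qed

lemma closed_vanishing_outside: "closed {w::'a \<Rightarrow> real. \<forall>v. v \<notin> B \<longrightarrow> w v = 0}"
proof -
  have "{w::'a \<Rightarrow> real. \<forall>v. v \<notin> B \<longrightarrow> w v = 0} = (\<Inter>v\<in>-B. (\<lambda>w. w v) -` {0})" by auto
  moreover have "closed ((\<lambda>w::'a \<Rightarrow> real. w v) -` {0})" for v
    by (intro closed_vimage closed_singleton continuous_on_product_coordinates)
  ultimately show ?thesis by (auto intro: closed_INT)
qed

lemma strictly_convex_set_imp_convex:
  assumes "strictly_convex_set A"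
  shows "convex A"
proof (rule convexI)
  fix x y and a b :: real
  assume xy: "x \<in> A" "y \<in> A" and ab: "0 \<le> a" "0 \<le> b" "a + b = 1"
  show "a *\<^sub>R x + b *\<^sub>R y \<in> A"
  proof (cases "a = 0 \<or> b = 0 \<or> x = y")
    case True
    then show ?thesis using xy ab by (auto simp: scaleR_add_left[symmetric])
  next
    case False
    then have "a *\<^sub>R x + (1 - a) *\<^sub>R y \<in> interior A"
      using assms xy ab unfolding strictly_convex_set_def by auto
    then show ?thesis using ab interior_subset by (metis add_diff_cancel_left' subsetD)
  qed
qed

lemma strictly_convex_set_midpoint:
  assumes "strictly_convex_set A" "x \<in> A" "y \<in> A" "x \<noteq> y"
  shows "(1/2::real) *\<^sub>R x + (1/2::real) *\<^sub>R y \<in> interior A"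
proof -
  have "(1/2::real) *\<^sub>R x + (1 - 1/2::real) *\<^sub>R y \<in> interior A"
    using assms(1)[unfolded strictly_convex_set_def, rule_format, of x y "1/2"] assms(2-4) by simp
  then show ?thesis by simp
qed

locale payoff_setting =
  fixes M :: "'a::{real_vector,t2_space,first_countable_topology} set"
    and \<pi> :: "'a \<Rightarrow> real" and A :: "'a set" and u :: "'a"
  assumes tvs: "lc_tvs TYPE('a)"
    and subspace_M: "subspace M"
    and linear_\<pi>: "linear_on_sub M \<pi>"
    and u_in_M: "u \<in> M" and \<pi>_u: "\<pi> u = 1"
    and closed_A: "closed A"
    and A_up: "\<And>x c. x \<in> A \<Longrightarrow> 0 \<le> c \<Longrightarrow> x + c *\<^sub>R u \<in> A"
    and strictly_convex_A: "strictly_convex_set A"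
    and payoffs_nonempty: "\<And>X. {\<pi> Z | Z. Z \<in> M \<and> X + Z \<in> A} \<noteq> {}"
    and payoffs_bdd_below: "\<And>X. bdd_below {\<pi> Z | Z. Z \<in> M \<and> X + Z \<in> A}"
begin

abbreviation "\<rho> \<equiv> rho M \<pi> A"
abbreviation "\<R> \<equiv> opt_payoff M \<pi> A"

lemma \<pi>_add: "x \<in> M \<Longrightarrow> y \<in> M \<Longrightarrow> \<pi> (x + y) = \<pi> x + \<pi> y"
  using linear_\<pi> by (simp add: linear_on_sub_def)

lemma \<pi>_scaleR: "x \<in> M \<Longrightarrow> \<pi> (c *\<^sub>R x) = c * \<pi> x"
  using linear_\<pi> by (simp add: linear_on_sub_def)

lemma \<pi>_diff: "x \<in> M \<Longrightarrow> y \<in> M \<Longrightarrow> \<pi> (x - y) = \<pi> x - \<pi> y"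
  using \<pi>_add[of "x - y" y] subspace_diff[OF subspace_M] by simp

lemma \<pi>_sum: "finite I \<Longrightarrow> (\<And>i. i \<in> I \<Longrightarrow> f i \<in> M) \<Longrightarrow> \<pi> (\<Sum>i\<in>I. f i) = (\<Sum>i\<in>I. \<pi> (f i))"
proof (induction I rule: finite_induct)
  case empty
  then show ?case using \<pi>_scaleR[OF u_in_M, of 0] by simp
next
  case (insert i I)
  then show ?case by (simp add: \<pi>_add subspace_sum[OF subspace_M])
qed

lemma \<rho>_le: "Z \<in> M \<Longrightarrow> Y + Z \<in> A \<Longrightarrow> \<rho> Y \<le> \<pi> Z"
  unfolding rho_def using payoffs_bdd_below by (intro cInf_lower) auto

lemma \<rho>_greatest: "(\<And>Z. Z \<in> M \<Longrightarrow> Y + Z \<in> A \<Longrightarrow> m \<le> \<pi> Z) \<Longrightarrow> m \<le> \<rho> Y"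
  unfolding rho_def using payoffs_nonempty by (intro cInf_greatest) auto

lemma interior_shift_down:
  assumes "W \<in> interior A"
  obtains \<epsilon> where "\<epsilon> > 0" "W - \<epsilon> *\<^sub>R u \<in> A"
proof -
  define line where "line = (\<lambda>t::real. W + (- t) *\<^sub>R u)"
  have "continuous_on UNIV line" unfolding line_def
    by (intro continuous_on_add_tvs[OF tvs] continuous_on_scaleR_tvs[OF tvs] continuous_intros)
  then have "open (line -` interior A)" by (intro open_vimage) auto
  moreover have "0 \<in> line -` interior A" using assms by (simp add: line_def)
  ultimately obtain e where e: "e > 0" "ball 0 e \<subseteq> line -` interior A" by (meson openE)
  moreover have "e/2 \<in> ball 0 e" using e(1) by simp
  ultimately have "line (e/2) \<in> interior A" by blast
  then show ?thesis using that[of "e/2"] e(1) interior_subset by (auto simp: line_def)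
qed

lemma shift_up_interior:
  assumes "x \<in> A" "\<epsilon> > 0"
  shows "x + \<epsilon> *\<^sub>R u \<in> interior A"
proof -
  have "u \<noteq> 0" using \<pi>_u \<pi>_scaleR[OF u_in_M, of 0] by auto
  then have "x \<noteq> x + (2*\<epsilon>) *\<^sub>R u" using assms(2) by simp
  moreover have "x + (2*\<epsilon>) *\<^sub>R u \<in> A" using A_up assms by simp
  ultimately have "(1/2::real) *\<^sub>R x + (1/2::real) *\<^sub>R (x + (2*\<epsilon>) *\<^sub>R u) \<in> interior A"
    using strictly_convex_set_midpoint[OF strictly_convex_A assms(1)] by blast
  moreover have "(1/2::real) *\<^sub>R x + (1/2::real) *\<^sub>R (x + (2*\<epsilon>) *\<^sub>R u) = x + \<epsilon> *\<^sub>R u"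
    by (simp add: algebra_simps flip: scaleR_add_left)
  ultimately show ?thesis by simp
qed

lemma opt_payoff_unique:
  assumes "Z1 \<in> \<R> X" "Z2 \<in> \<R> X"
  shows "Z1 = Z2"
proof (rule ccontr)
  assume "Z1 \<noteq> Z2"
  have Z: "Z1 \<in> M" "Z2 \<in> M" "X + Z1 \<in> A" "X + Z2 \<in> A" "\<pi> Z1 = \<rho> X" "\<pi> Z2 = \<rho> X"
    using assms by (auto simp: opt_payoff_def)
  define Zm where "Zm = (1/2) *\<^sub>R Z1 + (1/2) *\<^sub>R Z2"
  have Zm_M: "Zm \<in> M" unfolding Zm_def using Z subspace_M by (intro subspace_add subspace_scale) auto
  have \<pi>_Zm: "\<pi> Zm = \<rho> X"
    unfolding Zm_def using Z by (simp add: \<pi>_add \<pi>_scaleR subspace_scale[OF subspace_M])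
  have "(1/2::real) *\<^sub>R (X + Z1) + (1/2::real) *\<^sub>R (X + Z2) \<in> interior A"
    using strictly_convex_set_midpoint[OF strictly_convex_A Z(3,4)] \<open>Z1 \<noteq> Z2\<close> by simp
  moreover have "(1/2::real) *\<^sub>R (X + Z1) + (1/2::real) *\<^sub>R (X + Z2) = X + Zm"
    unfolding Zm_def by (simp add: algebra_simps flip: scaleR_add_left)
  ultimately obtain \<epsilon> where \<epsilon>: "\<epsilon> > 0" "X + (Zm - \<epsilon> *\<^sub>R u) \<in> A"
    by (metis interior_shift_down add_diff_eq)
  have "Zm - \<epsilon> *\<^sub>R u \<in> M" using Zm_M u_in_M subspace_M by (intro subspace_diff subspace_scale) auto
  then have "\<rho> X \<le> \<pi> (Zm - \<epsilon> *\<^sub>R u)" using \<rho>_le \<epsilon>(2) by blast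
  also have "\<dots> = \<rho> X - \<epsilon>"
    using \<pi>_Zm u_in_M Zm_M subspace_scale[OF subspace_M] \<pi>_u by (simp add: \<pi>_diff \<pi>_scaleR)
  finally show False using \<epsilon>(1) by simp
qed

end

text \<open>Compactness arguments take place in the coefficient space of a basis \<open>B\<close> of \<open>M\<close>
  (functions vanishing off \<open>B\<close>, with the product topology). The topology of \<open>M\<close> enters only
  through the continuity of \<open>basis_comb\<close>.\<close>

locale payoff_coords = payoff_setting +
  fixes B :: "'a set"
  assumes finite_B: "finite B" and B_subset: "B \<subseteq> M"
    and independent_B: "independent B" and M_subset_span: "M \<subseteq> span B"
begin

definition basis_comb :: "('a \<Rightarrow> real) \<Rightarrow> 'a" where
  "basis_comb w = (\<Sum>v\<in>B. w v *\<^sub>R v)"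

definition coeff_space :: "('a \<Rightarrow> real) set" where
  "coeff_space = {w. \<forall>v. v \<notin> B \<longrightarrow> w v = 0}"

definition coeff_dist :: "('a \<Rightarrow> real) \<Rightarrow> ('a \<Rightarrow> real) \<Rightarrow> real" where
  "coeff_dist z w = (\<Sum>v\<in>B. \<bar>w v - z v\<bar>)"

lemma basis_comb_in_M: "basis_comb w \<in> M"
  unfolding basis_comb_def using B_subset
  by (intro subspace_sum[OF subspace_M] subspace_scale[OF subspace_M]) auto

lemma basis_comb_surj:
  assumes "Z \<in> M"
  obtains w where "w \<in> coeff_space" "basis_comb w = Z"
proof -
  obtain c where c: "Z = (\<Sum>v\<in>B. c v *\<^sub>R v)"
    using M_subset_span assms span_finite[OF finite_B] by auto
  define w where "w = (\<lambda>v. if v \<in> B then c v else 0)"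
  have "w \<in> coeff_space" by (simp add: w_def coeff_space_def)
  moreover have "basis_comb w = Z" unfolding basis_comb_def c w_def by (intro sum.cong) auto
  ultimately show ?thesis by (rule that)
qed

lemma basis_comb_lincomb:
  "basis_comb (\<lambda>v. a * w v + b * w' v) = a *\<^sub>R basis_comb w + b *\<^sub>R basis_comb w'"
  unfolding basis_comb_def by (simp add: scaleR_add_left sum.distrib scaleR_sum_right)

lemma \<pi>_basis_comb: "\<pi> (basis_comb w) = (\<Sum>v\<in>B. w v * \<pi> v)"
proof -
  have "\<pi> (basis_comb w) = (\<Sum>v\<in>B. \<pi> (w v *\<^sub>R v))" unfolding basis_comb_def
    using finite_B B_subset subspace_scale[OF subspace_M] by (intro \<pi>_sum) auto
  also have "\<dots> = (\<Sum>v\<in>B. w v * \<pi> v)" using B_subset by (intro sum.cong) (auto simp: \<pi>_scaleR)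
  finally show ?thesis .
qed

lemma inj_on_basis_comb: "inj_on basis_comb coeff_space"
proof (rule inj_onI)
  fix w w' assume w: "w \<in> coeff_space" "w' \<in> coeff_space" and eq: "basis_comb w = basis_comb w'"
  have "(\<Sum>v\<in>B. (w v - w' v) *\<^sub>R v) = 0" using eq unfolding basis_comb_def
    by (simp add: scaleR_diff_left sum_subtractf)
  then have "w v = w' v" if "v \<in> B" for v
    using independentD[OF independent_B finite_B subset_refl, of "\<lambda>v. w v - w' v"] that by simp
  moreover have "w v = w' v" if "v \<notin> B" for v using w that by (simp add: coeff_space_def)
  ultimately show "w = w'" by blast
qed

lemma continuous_basis_comb: "continuous_on UNIV basis_comb"
  unfolding basis_comb_def
  by (intro continuous_on_sum_tvs[OF tvs finite_B] continuous_on_scaleR_tvs[OF tvs]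
      continuous_on_product_coordinates continuous_on_const)

lemma continuous_\<pi>_basis_comb: "continuous_on UNIV (\<lambda>w. \<pi> (basis_comb w))"
  unfolding \<pi>_basis_comb
  by (intro continuous_on_sum continuous_on_mult continuous_on_product_coordinates continuous_on_const)

lemma continuous_coeff_dist: "continuous_on UNIV (coeff_dist z)"
  unfolding coeff_dist_def
  by (intro continuous_on_sum continuous_on_rabs continuous_on_diff
      continuous_on_product_coordinates continuous_on_const)

lemma coeff_dist_self: "coeff_dist z z = 0"
  by (simp add: coeff_dist_def)

lemma coeff_le_coeff_dist: "v \<in> B \<Longrightarrow> \<bar>w v - z v\<bar> \<le> coeff_dist z w"
  unfolding coeff_dist_def using finite_B by (intro member_le_sum) auto

lemma closed_coeff_space: "closed coeff_space"
  unfolding coeff_space_def by (rule closed_vanishing_outside)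

lemma compact_coeff_ball: "compact {w \<in> coeff_space. coeff_dist z w \<le> \<delta>}"
proof -
  define cube where
    "cube = (\<Pi>\<^sub>E v\<in>UNIV. {(if v \<in> B then z v - \<delta> else 0) .. (if v \<in> B then z v + \<delta> else 0)})"
  have "w \<in> cube" if "w \<in> coeff_space" "coeff_dist z w \<le> \<delta>" for w
  proof -
    have "\<bar>w v - z v\<bar> \<le> \<delta>" if "v \<in> B" for v
      using coeff_le_coeff_dist[OF that, of w z] \<open>coeff_dist z w \<le> \<delta>\<close> by linarith
    then show ?thesis using \<open>w \<in> coeff_space\<close> by (fastforce simp: cube_def coeff_space_def abs_le_iff)
  qed
  then have sub: "{w \<in> coeff_space. coeff_dist z w \<le> \<delta>} \<subseteq> cube" by blast
  have "closed {w \<in> coeff_space. coeff_dist z w \<le> \<delta>}"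
    unfolding Collect_conj_eq Collect_mem_eq
    by (intro closed_Int closed_coeff_space closed_Collect_le continuous_coeff_dist continuous_on_const)
  then have "compact (cube \<inter> {w \<in> coeff_space. coeff_dist z w \<le> \<delta>})"
    unfolding cube_def by (intro compact_Int_closed compact_PiE_atLeastAtMost)
  then show ?thesis using sub by (simp add: Int_absorb1)
qed

lemma basis_comb_nbhd:
  assumes "open U" "z \<in> coeff_space" "basis_comb z \<in> U"
  obtains \<delta> where "\<delta> > 0" "\<And>w. w \<in> coeff_space \<Longrightarrow> coeff_dist z w \<le> \<delta> \<Longrightarrow> basis_comb w \<in> U"
proof -
  have "open (basis_comb -` U)" by (intro open_vimage assms(1) continuous_basis_comb)
  then obtain \<delta> where \<delta>: "\<delta> > 0" "\<And>w. (\<forall>v. v \<notin> B \<longrightarrow> w v = z v) \<Longrightarrow>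
      (\<forall>v\<in>B. \<bar>w v - z v\<bar> \<le> \<delta>) \<Longrightarrow> w \<in> basis_comb -` U"
    using open_fun_contains_finite_box[OF _ _ finite_B] assms(3) by blast
  show ?thesis
  proof (rule that[OF \<delta>(1)])
    fix w assume "w \<in> coeff_space" "coeff_dist z w \<le> \<delta>"
    then show "basis_comb w \<in> U"
      using \<delta>(2)[of w] assms(2) coeff_le_coeff_dist[of _ w z] by (force simp: coeff_space_def)
  qed
qed

lemma sphere_gap:
  assumes z: "z \<in> coeff_space" "basis_comb z \<in> \<R> X" and "\<delta> > 0"
  obtains \<eta> where "\<eta> > 0"
    "\<And>w. w \<in> coeff_space \<Longrightarrow> coeff_dist z w = \<delta> \<Longrightarrow> X + basis_comb w \<in> A \<Longrightarrow>
       \<rho> X + \<eta> < \<pi> (basis_comb w)"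
proof -
  define S where "S = {w \<in> coeff_space. coeff_dist z w = \<delta> \<and> X + basis_comb w \<in> A}"
  have "closed ({w. coeff_dist z w = \<delta>} \<inter> (\<lambda>w. X + basis_comb w) -` A)"
    by (intro closed_Int closed_Collect_eq continuous_coeff_dist continuous_on_const
        closed_vimage[OF closed_A] continuous_on_add_tvs[OF tvs] continuous_basis_comb)
  from compact_Int_closed[OF compact_coeff_ball[of z \<delta>] this]
  have "compact S" unfolding S_def by (rule back_subst) auto
  show ?thesis
  proof (cases "S = {}")
    case True
    then show ?thesis using that[of 1] by (auto simp: S_def)
  next
    case False
    obtain w1 where w1: "w1 \<in> S" "\<And>w. w \<in> S \<Longrightarrow> \<pi> (basis_comb w1) \<le> \<pi> (basis_comb w)"
      using continuous_attains_inf[OF \<open>compact S\<close> False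
          continuous_on_subset[OF continuous_\<pi>_basis_comb]] by blast
    have "w1 \<noteq> z" using w1(1) \<open>\<delta> > 0\<close> coeff_dist_self[of z] by (auto simp: S_def)
    then have "basis_comb w1 \<noteq> basis_comb z"
      using inj_on_basis_comb z(1) w1(1) by (auto simp: S_def dest: inj_onD)
    then have "basis_comb w1 \<notin> \<R> X" using opt_payoff_unique z(2) by blast
    moreover have "X + basis_comb w1 \<in> A" using w1(1) by (simp add: S_def)
    ultimately have "\<pi> (basis_comb w1) \<noteq> \<rho> X" using basis_comb_in_M by (simp add: opt_payoff_def)
    moreover have "\<rho> X \<le> \<pi> (basis_comb w1)"
      using \<rho>_le basis_comb_in_M \<open>X + basis_comb w1 \<in> A\<close> by blast
    ultimately have gap: "\<rho> X < \<pi> (basis_comb w1)" by simp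
    show ?thesis
    proof (rule that[of "(\<pi> (basis_comb w1) - \<rho> X) / 2"])
      show "(\<pi> (basis_comb w1) - \<rho> X) / 2 > 0" using gap by simp
      fix w assume "w \<in> coeff_space" "coeff_dist z w = \<delta>" "X + basis_comb w \<in> A"
      then have "\<pi> (basis_comb w1) \<le> \<pi> (basis_comb w)" using w1(2) by (simp add: S_def)
      then show "\<rho> X + (\<pi> (basis_comb w1) - \<rho> X) / 2 < \<pi> (basis_comb w)" using gap by (simp add: field_simps)
    qed
  qed
qed

lemma unacceptable_compact_persists:
  assumes "compact C" "\<And>w. w \<in> C \<Longrightarrow> X + basis_comb w \<notin> A"
  obtains V where "open V" "X \<in> V" "\<And>Y w. Y \<in> V \<Longrightarrow> w \<in> C \<Longrightarrow> Y + basis_comb w \<notin> A"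
proof -
  define F where "F = (\<lambda>p::'a \<times> ('a \<Rightarrow> real). fst p + basis_comb (snd p))"
  have "continuous_on UNIV (\<lambda>p::'a \<times> ('a \<Rightarrow> real). basis_comb (snd p))"
    by (rule continuous_on_compose2[OF continuous_basis_comb continuous_on_snd[OF continuous_on_id]]) auto
  then have "continuous_on UNIV F" unfolding F_def
    by (intro continuous_on_add_tvs[OF tvs] continuous_on_fst[OF continuous_on_id])
  then have "open (- (F -` A))" by (intro open_Compl closed_vimage[OF closed_A])
  moreover have "{X} \<times> C \<subseteq> - (F -` A)" using assms(2) by (auto simp: F_def)
  ultimately obtain V where "X \<in> V" "open V" "V \<times> C \<subseteq> - (F -` A)"
    by (metis Elementary_Topology.tube_lemma[OF assms(1)])
  moreover have "Y + basis_comb w \<notin> A" if "Y \<in> V" "w \<in> C" for Y w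
    using \<open>V \<times> C \<subseteq> - (F -` A)\<close> that by (auto simp: F_def)
  ultimately show ?thesis using that by blast
qed

lemma strictly_acceptable_coeffs_near:
  assumes "z \<in> coeff_space" "X + basis_comb z \<in> A" "\<delta> > 0" "\<eta> > 0"
  obtains z1 where "z1 \<in> coeff_space" "coeff_dist z z1 < \<delta>" "X + basis_comb z1 \<in> interior A"
    "\<pi> (basis_comb z1) \<le> \<pi> (basis_comb z) + \<eta>"
proof -
  obtain uc where uc: "uc \<in> coeff_space" "basis_comb uc = u" using basis_comb_surj u_in_M by blast
  define s where "s = (\<Sum>v\<in>B. \<bar>uc v\<bar>)"
  have "s \<ge> 0" unfolding s_def by (simp add: sum_nonneg)
  define \<epsilon> where "\<epsilon> = min \<eta> (\<delta> / (2 * (s + 1)))"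
  have "\<epsilon> > 0" using assms(3,4) \<open>s \<ge> 0\<close> by (simp add: \<epsilon>_def)
  define z1 where "z1 = (\<lambda>v. 1 * z v + \<epsilon> * uc v)"
  have comb: "basis_comb z1 = basis_comb z + \<epsilon> *\<^sub>R u" unfolding z1_def basis_comb_lincomb uc(2) by simp
  show ?thesis
  proof (rule that[of z1])
    show "z1 \<in> coeff_space" using assms(1) uc(1) by (simp add: coeff_space_def z1_def)
    have "coeff_dist z z1 = \<epsilon> * s" unfolding coeff_dist_def z1_def s_def using \<open>\<epsilon> > 0\<close>
      by (simp add: abs_mult sum_distrib_left)
    also have "\<dots> \<le> \<delta> / (2 * (s + 1)) * s" using \<open>s \<ge> 0\<close> by (intro mult_right_mono) (auto simp: \<epsilon>_def)
    also have "\<dots> < \<delta>" using assms(3) \<open>s \<ge> 0\<close> by (simp add: field_simps add_nonneg_pos)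
    finally show "coeff_dist z z1 < \<delta>" .
    show "X + basis_comb z1 \<in> interior A"
      using shift_up_interior[OF assms(2) \<open>\<epsilon> > 0\<close>] by (simp only: comb add.assoc)
    have "\<pi> (basis_comb z1) = \<pi> (basis_comb z) + \<epsilon>"
      using basis_comb_in_M u_in_M subspace_scale[OF subspace_M] \<pi>_u by (simp add: comb \<pi>_add \<pi>_scaleR)
    then show "\<pi> (basis_comb z1) \<le> \<pi> (basis_comb z) + \<eta>" by (simp add: \<epsilon>_def)
  qed
qed

lemma acceptable_sublevel_in_ball:
  assumes z1: "z1 \<in> coeff_space" "coeff_dist z z1 < \<delta>" "Y + basis_comb z1 \<in> A" "\<pi> (basis_comb z1) \<le> c"
    and sphere: "\<And>w. w \<in> coeff_space \<Longrightarrow> coeff_dist z w = \<delta> \<Longrightarrow> \<pi> (basis_comb w) \<le> c \<Longrightarrow>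
      Y + basis_comb w \<notin> A"
    and w: "w \<in> coeff_space" "Y + basis_comb w \<in> A" "\<pi> (basis_comb w) \<le> c"
  shows "coeff_dist z w < \<delta>"
proof (rule ccontr)
  assume "\<not> coeff_dist z w < \<delta>"
  define g where "g = (\<lambda>t::real. (\<lambda>v. (1 - t) * z1 v + t * w v))"
  have "coeff_dist z (g 0) \<le> \<delta>" "\<delta> \<le> coeff_dist z (g 1)"
    using z1(2) \<open>\<not> coeff_dist z w < \<delta>\<close> by (simp_all add: g_def)
  moreover have "continuous_on {0..1} (\<lambda>t. coeff_dist z (g t))"
    unfolding coeff_dist_def g_def by (intro continuous_intros)
  ultimately obtain t where t: "0 \<le> t" "t \<le> 1" "coeff_dist z (g t) = \<delta>"
    using IVT'[of "\<lambda>t. coeff_dist z (g t)" 0 \<delta> 1] by auto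
  have comb: "basis_comb (g t) = (1 - t) *\<^sub>R basis_comb z1 + t *\<^sub>R basis_comb w"
    unfolding g_def by (rule basis_comb_lincomb)
  have "g t \<in> coeff_space" using z1(1) w(1) by (simp add: coeff_space_def g_def)
  moreover have "Y + basis_comb (g t) = (1 - t) *\<^sub>R (Y + basis_comb z1) + t *\<^sub>R (Y + basis_comb w)"
    by (simp add: comb algebra_simps)
  then have "Y + basis_comb (g t) \<in> A"
    using convexD[OF strictly_convex_set_imp_convex[OF strictly_convex_A] z1(3) w(2)] t by simp
  moreover have "\<pi> (basis_comb (g t)) = (1 - t) * \<pi> (basis_comb z1) + t * \<pi> (basis_comb w)"
    using basis_comb_in_M subspace_scale[OF subspace_M] by (simp add: comb \<pi>_add \<pi>_scaleR)
  then have "\<pi> (basis_comb (g t)) \<le> c"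
    using convex_bound_le[OF z1(4) w(3), of "1 - t" t] t by simp
  ultimately show False using sphere t(3) by blast
qed

lemma opt_payoff_in_ball:
  assumes z1: "z1 \<in> coeff_space" "coeff_dist z z1 < \<delta>" "Y + basis_comb z1 \<in> A" "\<pi> (basis_comb z1) \<le> c"
    and sphere: "\<And>w. w \<in> coeff_space \<Longrightarrow> coeff_dist z w = \<delta> \<Longrightarrow> \<pi> (basis_comb w) \<le> c \<Longrightarrow>
      Y + basis_comb w \<notin> A"
  obtains w where "w \<in> coeff_space" "coeff_dist z w < \<delta>" "basis_comb w \<in> \<R> Y"
proof -
  define T where "T = {w \<in> coeff_space. Y + basis_comb w \<in> A \<and> \<pi> (basis_comb w) \<le> c}"
  have T_ball: "coeff_dist z w < \<delta>" if "w \<in> T" for w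
  proof (rule acceptable_sublevel_in_ball[OF z1])
    fix w' assume "w' \<in> coeff_space" "coeff_dist z w' = \<delta>" "\<pi> (basis_comb w') \<le> c"
    then show "Y + basis_comb w' \<notin> A" by (rule sphere)
  qed (use that in \<open>simp_all add: T_def\<close>)
  have "closed ((\<lambda>w. Y + basis_comb w) -` A \<inter> {w. \<pi> (basis_comb w) \<le> c})"
    by (intro closed_Int closed_vimage[OF closed_A] continuous_on_add_tvs[OF tvs] continuous_on_const
        continuous_basis_comb closed_Collect_le continuous_\<pi>_basis_comb)
  moreover have "T = {w \<in> coeff_space. coeff_dist z w \<le> \<delta>} \<inter>
      ((\<lambda>w. Y + basis_comb w) -` A \<inter> {w. \<pi> (basis_comb w) \<le> c})"
    using T_ball by (auto simp: T_def less_imp_le)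
  ultimately have "compact T" using compact_Int_closed[OF compact_coeff_ball[of z \<delta>]] by simp
  moreover have "T \<noteq> {}" using z1 by (auto simp: T_def)
  ultimately obtain ws where ws: "ws \<in> T" "\<forall>w\<in>T. \<pi> (basis_comb ws) \<le> \<pi> (basis_comb w)"
    using continuous_attains_inf[OF _ _ continuous_on_subset[OF continuous_\<pi>_basis_comb subset_UNIV]]
    by meson
  have ws_coeff: "ws \<in> coeff_space" and acc: "Y + basis_comb ws \<in> A"
    using ws(1) by (simp_all add: T_def)
  have "\<pi> (basis_comb ws) \<le> \<rho> Y"
  proof (rule \<rho>_greatest)
    fix Z assume Z: "Z \<in> M" "Y + Z \<in> A"
    show "\<pi> (basis_comb ws) \<le> \<pi> Z"
    proof (cases "\<pi> Z \<le> c")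
      case True
      obtain w where "w \<in> coeff_space" "basis_comb w = Z" using basis_comb_surj Z(1) by blast
      then have "w \<in> T" using True Z(2) by (simp add: T_def)
      then show ?thesis using ws(2) \<open>basis_comb w = Z\<close> by blast
    next
      case False
      then show ?thesis using ws(1) by (simp add: T_def)
    qed
  qed
  then have "\<pi> (basis_comb ws) = \<rho> Y" using \<rho>_le[OF basis_comb_in_M acc] by simp
  then have "basis_comb ws \<in> \<R> Y" using basis_comb_in_M acc by (simp add: opt_payoff_def)
  then show ?thesis using that ws_coeff T_ball[OF ws(1)] by blast
qed

lemma lsc_at_opt_payoff: "lsc_at M \<R> X"
  unfolding lsc_at_def
proof (intro allI impI)
  fix U assume "openin (top_of_set M) U" "\<R> X \<inter> U \<noteq> {}"
  then obtain Z0 O' where Z0: "Z0 \<in> \<R> X" "Z0 \<in> O'" and O': "open O'" "U = M \<inter> O'"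
    by (auto simp: openin_open)
  obtain z where z: "z \<in> coeff_space" "basis_comb z = Z0"
    using basis_comb_surj Z0(1) by (auto simp: opt_payoff_def)
  have z_opt: "basis_comb z \<in> \<R> X" and z_near: "basis_comb z \<in> O'" using Z0 z(2) by simp_all
  then have z_acc: "X + basis_comb z \<in> A" and z_cost: "\<pi> (basis_comb z) = \<rho> X"
    by (simp_all add: opt_payoff_def)
  obtain \<delta> where \<delta>: "\<delta> > 0" "\<And>w. w \<in> coeff_space \<Longrightarrow> coeff_dist z w \<le> \<delta> \<Longrightarrow> basis_comb w \<in> O'"
    by (fact basis_comb_nbhd[OF O'(1) z(1) z_near])
  obtain \<eta> where \<eta>: "\<eta> > 0" "\<And>w. w \<in> coeff_space \<Longrightarrow> coeff_dist z w = \<delta> \<Longrightarrow>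
      X + basis_comb w \<in> A \<Longrightarrow> \<rho> X + \<eta> < \<pi> (basis_comb w)"
    by (fact sphere_gap[OF z(1) z_opt \<delta>(1)])
  define C where "C = {w \<in> coeff_space. coeff_dist z w = \<delta> \<and> \<pi> (basis_comb w) \<le> \<rho> X + \<eta>}"
  have "closed ({w. coeff_dist z w = \<delta>} \<inter> {w. \<pi> (basis_comb w) \<le> \<rho> X + \<eta>})"
    by (intro closed_Int closed_Collect_eq closed_Collect_le continuous_coeff_dist
        continuous_\<pi>_basis_comb continuous_on_const)
  from compact_Int_closed[OF compact_coeff_ball[of z \<delta>] this]
  have "compact C" unfolding C_def by (rule back_subst) auto
  obtain V where V: "open V" "X \<in> V" "\<And>Y w. Y \<in> V \<Longrightarrow> w \<in> C \<Longrightarrow> Y + basis_comb w \<notin> A"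
  proof (rule unacceptable_compact_persists[OF \<open>compact C\<close>])
    fix w assume "w \<in> C"
    then show "X + basis_comb w \<notin> A" using \<eta>(2)[of w] by (auto simp: C_def)
  qed blast
  obtain z1 where z1: "z1 \<in> coeff_space" "coeff_dist z z1 < \<delta>"
      "X + basis_comb z1 \<in> interior A" "\<pi> (basis_comb z1) \<le> \<pi> (basis_comb z) + \<eta>"
    by (fact strictly_acceptable_coeffs_near[OF z(1) z_acc \<delta>(1) \<eta>(1)])
  define V' where "V' = V \<inter> (\<lambda>Y. Y + basis_comb z1) -` interior A"
  show "\<exists>UX. open UX \<and> X \<in> UX \<and> (\<forall>Y\<in>UX. \<R> Y \<inter> U \<noteq> {})"
  proof (intro exI[of _ V'] conjI ballI)
    show "open V'" unfolding V'_def
      by (intro open_Int V(1) open_vimage open_interior continuous_on_add_tvs[OF tvs]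
          continuous_on_id continuous_on_const)
    show "X \<in> V'" using V(2) z1(3) by (simp add: V'_def)
    fix Y assume "Y \<in> V'"
    then have "Y + basis_comb z1 \<in> A" using interior_subset by (auto simp: V'_def)
    then obtain w where w: "w \<in> coeff_space" "coeff_dist z w < \<delta>" "basis_comb w \<in> \<R> Y"
    proof (rule opt_payoff_in_ball[OF z1(1,2)])
      show "\<pi> (basis_comb z1) \<le> \<rho> X + \<eta>" using z1(4) z_cost by simp
      fix w assume "w \<in> coeff_space" "coeff_dist z w = \<delta>" "\<pi> (basis_comb w) \<le> \<rho> X + \<eta>"
      then show "Y + basis_comb w \<notin> A" using V(3) \<open>Y \<in> V'\<close> by (simp add: V'_def C_def)
    qed blast
    then have "basis_comb w \<in> U" using \<delta>(2) basis_comb_in_M O'(2) by simp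
    then show "\<R> Y \<inter> U \<noteq> {}" using w(3) by blast
  qed
qed

end

theorem mainTheorem5:
  fixes ge :: "'a::{real_vector, t2_space, first_countable_topology} \<Rightarrow> 'a \<Rightarrow> bool"
    and M :: "'a set" and \<pi> :: "'a \<Rightarrow> real" and A :: "'a set"
  assumes tvs: "lc_tvs TYPE('a)"
    and ord: "vector_order ge"
    and M_sub: "subspace M"
    and M_fin: "\<exists>B. finite B \<and> span B = M"
    and M_dim: "1 < dim M"
    and pi_lin: "linear_on_sub M \<pi>"
    and A1: "\<exists>U\<in>M \<inter> pos_cone ge. \<pi> U = 1"
    and A2: "closed A" "A \<noteq> UNIV" "0 \<in> A" "\<forall>X\<in>A. \<forall>P\<in>pos_cone ge. X + P \<in> A"
    and A3_fin: "\<forall>X. {\<pi> Z | Z. Z \<in> M \<and> X + Z \<in> A} \<noteq> {} \<and> bdd_below {\<pi> Z | Z. Z \<in> M \<and> X + Z \<in> A}"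
    and A3_cont: "continuous_on UNIV (rho M \<pi> A)"
    and sc: "strictly_convex_set A"
  shows "\<forall>X. lsc_at M (opt_payoff M \<pi> A) X"
proof -
  obtain u where u: "u \<in> M" "ge u 0" "\<pi> u = 1" using A1 by (auto simp: pos_cone_def)
  have "ge (c *\<^sub>R u) 0" if "c \<ge> 0" for c
    using ord u(2) that unfolding vector_order_def by (metis scale_zero_right)
  then have A_up: "x + c *\<^sub>R u \<in> A" if "x \<in> A" "c \<ge> 0" for x c
    using A2(4) that by (auto simp: pos_cone_def)
  obtain B where B: "B \<subseteq> M" "independent B" "M \<subseteq> span B"
    by (rule basis_exists)
  obtain B0 where "finite B0" "span B0 = M" using M_fin by blast
  then have "finite B" using independent_span_bound[OF \<open>finite B0\<close> B(2)] B(1) by simp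
  interpret payoff_coords M \<pi> A u B
    using tvs M_sub pi_lin u(1,3) A2(1) A_up sc A3_fin B \<open>finite B\<close> by unfold_locales auto
  show ?thesis using lsc_at_opt_payoff by blast
qed

end
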